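(* Consider downlink two-user NOMA with users $U_1,U_2$ at fixed distances $0<d_1<d_2$ from the base station (BS). Let $X_k=|h_k|^2d_k^{-\alpha}$ be the channel gains, with $\alpha>0$ and $h_1,h_2$ i.i.d. $\mathcal{CN}(0,1)$, independent of the BS's distance estimates $\hat d_1,\hat d_2$ (defined in the context), and let $P_e^1=\Pr\{\hat d_1>\hat d_2\}$. The BS transmits with SNR $\rho>0$, giving power fraction $\beta\in(0,1)$ to the user with the larger estimated distance and $1-\beta$ to the user $N$ with the smaller estimated distance. Let $\epsilon_0=2^{R_0^*}-1>0$ for a target rate $R_0^*>0$ and assume $\beta-(1-\beta)\epsilon_0>0$. Define the common outage probability $$P_{cop}=1-\Pr\left\{\frac{X_1\beta}{X_1(1-\beta)+\frac1\rho}>\epsilon_0,\ \frac{X_2\beta}{X_2(1-\beta)+\frac1\rho}>\epsilon_0,\ \rho(1-\beta)X_N>\epsilon_0\right\},$$ where $X_N$ is the channel gain of user $N$. Then $$P_{cop}=1-(1-P_e^1)e^{-(\lambda_2A+\lambda_1\zeta)}-P_e^1e^{-(\lambda_1A+\lambda_2\zeta)},$$ where $\lambda_k=d_k^\alpha$, $A=\frac{\epsilon_0}{\rho[\beta-(1-\beta)\epsilon_0]}$, $B=\frac{\epsilon_0}{\rho(1-\beta)}$, and $\zeta=\max\{A,B\}$.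
   Context: Position model: user $U_k$ is at fixed position $(x_k,y_k)$ with $d_k=\sqrt{x_k^2+y_k^2}$; the BS's estimates are $\hat x_k\sim\mathcal N(x_k,\sigma_{ob}^2)$, $\hat y_k\sim\mathcal N(y_k,\sigma_{ob}^2)$, all mutually independent, and $\hat d_k=\sqrt{\hat x_k^2+\hat y_k^2}$. The non-outage event encodes SIC decoding: both users must decode the estimated-far user's signal (power fraction $\beta$) treating the other as noise, and the estimated-near user must then decode its own signal after cancellation. *)

theory Defs
  imports "HOL-Probability.Probability"
begin

definition true_dist :: "(nat \<Rightarrow> real) \<Rightarrow> (nat \<Rightarrow> real) \<Rightarrow> nat \<Rightarrow> real" where
  "true_dist x y k = sqrt ((x k)\<^sup>2 + (y k)\<^sup>2)"

definition est_dist :: "(nat \<Rightarrow> 'a \<Rightarrow> real) \<Rightarrow> (nat \<Rightarrow> 'a \<Rightarrow> real) \<Rightarrow> nat \<Rightarrow> 'a \<Rightarrow> real" where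
  "est_dist xh yh k \<omega> = sqrt ((xh k \<omega>)\<^sup>2 + (yh k \<omega>)\<^sup>2)"

definition gain :: "('a \<Rightarrow> complex) \<Rightarrow> real \<Rightarrow> real \<Rightarrow> 'a \<Rightarrow> real" where
  "gain hk dk \<alpha> \<omega> = (cmod (hk \<omega>))\<^sup>2 * dk powr (-\<alpha>)"

definition all_vars :: "(nat \<Rightarrow> 'a \<Rightarrow> complex) \<Rightarrow> (nat \<Rightarrow> 'a \<Rightarrow> real) \<Rightarrow> (nat \<Rightarrow> 'a \<Rightarrow> real)
    \<Rightarrow> nat \<times> nat \<Rightarrow> 'a \<Rightarrow> real" where
  "all_vars h xh yh jk = (case jk of (j, k) \<Rightarrow>
     (if j = 0 then (\<lambda>\<omega>. Re (h k \<omega>)) else if j = 1 then (\<lambda>\<omega>. Im (h k \<omega>))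
      else if j = 2 then xh k else yh k))"

end

theory Submission
  imports Defs
begin

text \<open>For a unit-variance circularly symmetric complex Gaussian \<open>h\<close>, \<open>|h|\<^sup>2\<close> is exponentially
  distributed with mean 1, so the gain \<open>|h\<^sub>k|\<^sup>2 d\<^sub>k\<^sup>-\<^sup>\<alpha>\<close> exceeds \<open>c \<ge> 0\<close> with probability
  \<open>exp (- \<lambda>\<^sub>k c)\<close>. Solving the three SINR inequalities for the gains, SIC succeeds iff the gain of
  the user estimated to be farther exceeds \<open>A\<close> and the gain of the user estimated to be nearer
  exceeds \<open>\<zeta> = max A B\<close>. Which user is estimated nearer depends only on the position estimates,
  which are independent of both fading coefficients; splitting on the event that the estimates
  swap the true order (probability \<open>P\<^sub>e\<close>) and multiplying the probabilities of independent events
  gives the formula.\<close>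

lemma nn_integral_lborel_even:
  fixes g :: "real \<Rightarrow> ennreal"
  assumes [measurable]: "g \<in> borel_measurable borel" and even: "\<And>x. g (-x) = g x"
  shows "(\<integral>\<^sup>+x. g x \<partial>lborel) = 2 * (\<integral>\<^sup>+x. g x * indicator {0..} x \<partial>lborel)"
proof -
  have "(\<integral>\<^sup>+x. g x \<partial>lborel) = (\<integral>\<^sup>+x. g x * indicator {0..} x + g x * indicator {..<0} x \<partial>lborel)"
    by (intro nn_integral_cong) (auto split: split_indicator)
  also have "\<dots> = (\<integral>\<^sup>+x. g x * indicator {0..} x \<partial>lborel) + (\<integral>\<^sup>+x. g x * indicator {..<0} x \<partial>lborel)"
    by (intro nn_integral_add) auto
  also have "(\<integral>\<^sup>+x. g x * indicator {..<0} x \<partial>lborel)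
      = ennreal \<bar>-1::real\<bar> * (\<integral>\<^sup>+x. g (0 + (-1) * x) * indicator {..<0} (0 + (-1) * x) \<partial>lborel)"
    by (rule nn_integral_real_affine) auto
  also have "\<dots> = (\<integral>\<^sup>+x. g x * indicator {0<..} x \<partial>lborel)"
    using even by (auto intro!: nn_integral_cong split: split_indicator)
  also have "\<dots> = (\<integral>\<^sup>+x. g x * indicator {0..} x \<partial>lborel)"
    by (intro nn_integral_cong_AE eventually_mono[OF AE_lborel_singleton[of 0]])
       (auto split: split_indicator)
  finally show ?thesis by (simp add: mult_2)
qed

lemma nn_integral_abs_mult_exp_neg_sq_tail:
  fixes c t :: real
  assumes c: "c > 0" and t: "t \<ge> 0"
  shows "(\<integral>\<^sup>+x. ennreal (if t < c * x\<^sup>2 then \<bar>x\<bar> * exp (- (c * x\<^sup>2)) else 0) \<partial>lborel)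
       = ennreal (exp (-t) / c)"
proof -
  define a where "a = sqrt (t / c)"
  have a: "a \<ge> 0" "c * a\<^sup>2 = t" using c t by (simp_all add: a_def)
  have tail_iff: "t < c * x\<^sup>2 \<longleftrightarrow> a < x" if "x \<ge> 0" for x
    using a c that by (metis mult_less_cancel_left_pos power_less_imp_less_base power_strict_mono
        zero_less_numeral)
  have "(\<integral>\<^sup>+x. ennreal (if t < c * x\<^sup>2 then \<bar>x\<bar> * exp (- (c * x\<^sup>2)) else 0) \<partial>lborel)
      = 2 * (\<integral>\<^sup>+x. ennreal (if t < c * x\<^sup>2 then \<bar>x\<bar> * exp (- (c * x\<^sup>2)) else 0) * indicator {0..} x \<partial>lborel)"
    by (rule nn_integral_lborel_even) (measurable; simp)+
  also have "(\<integral>\<^sup>+x. ennreal (if t < c * x\<^sup>2 then \<bar>x\<bar> * exp (- (c * x\<^sup>2)) else 0) * indicator {0..} x \<partial>lborel)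
      = (\<integral>\<^sup>+x. ennreal (x * exp (- (c * x\<^sup>2))) * indicator {a..} x \<partial>lborel)"
    using tail_iff a by (intro nn_integral_cong_AE eventually_mono[OF AE_lborel_singleton[of a]])
      (auto split: split_indicator)
  also have "\<dots> = ennreal (0 - (- exp (- (c * a\<^sup>2)) / (2 * c)))"
  proof (rule nn_integral_FTC_atLeast)
    have "((\<lambda>x::real. - exp (- (c * x\<^sup>2)) / (2 * c)) \<longlongrightarrow> - 0 / (2 * c)) at_top"
      by (intro tendsto_divide tendsto_minus filterlim_compose[OF exp_at_bot]
          filterlim_compose[OF filterlim_uminus_at_bot_at_top]
          filterlim_tendsto_pos_mult_at_top[OF tendsto_const c] filterlim_pow_at_top filterlim_ident)
        (use c in auto)
    then show "((\<lambda>x::real. - exp (- (c * x\<^sup>2)) / (2 * c)) \<longlongrightarrow> 0) at_top"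
      by simp
    show "((\<lambda>x. - exp (- (c * x\<^sup>2)) / (2 * c)) has_real_derivative x * exp (- (c * x\<^sup>2))) (at x)"
      for x :: real
      using c by (auto intro!: derivative_eq_intros simp: field_simps)
  qed (use a in auto)
  finally show ?thesis
    using a c by (simp add: numeral_mult_ennreal)
qed

text \<open>The substitution \<open>y = x s\<close> turns the integral over the plane into an iterated integral
  whose inner integral is elementary and whose outer integral is \<open>\<integral> ds / (1 + s\<^sup>2) = \<pi>\<close>.\<close>

lemma nn_integral_exp_neg_norm_sq_tail:
  fixes t :: real
  assumes t: "t \<ge> 0"
  shows "(\<integral>\<^sup>+x. \<integral>\<^sup>+y. ennreal (if t < x\<^sup>2 + y\<^sup>2 then exp (- (x\<^sup>2 + y\<^sup>2)) else 0) \<partial>lborel \<partial>lborel)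
       = ennreal (pi * exp (-t))"
proof -
  define G where "G x s = ennreal (if t < (1 + s\<^sup>2) * x\<^sup>2 then \<bar>x\<bar> * exp (- ((1 + s\<^sup>2) * x\<^sup>2)) else 0)"
    for x s :: real
  have substitution:
    "(\<integral>\<^sup>+y. ennreal (if t < x\<^sup>2 + y\<^sup>2 then exp (- (x\<^sup>2 + y\<^sup>2)) else 0) \<partial>lborel) = (\<integral>\<^sup>+s. G x s \<partial>lborel)"
    if x: "x \<noteq> 0" for x :: real
  proof -
    have sq: "x\<^sup>2 + (0 + x * s)\<^sup>2 = (1 + s\<^sup>2) * x\<^sup>2" for s
      by (simp add: algebra_simps power_mult_distrib)
    have "(\<integral>\<^sup>+y. ennreal (if t < x\<^sup>2 + y\<^sup>2 then exp (- (x\<^sup>2 + y\<^sup>2)) else 0) \<partial>lborel)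
        = ennreal \<bar>x\<bar> * (\<integral>\<^sup>+s. ennreal (if t < x\<^sup>2 + (0 + x * s)\<^sup>2
                                        then exp (- (x\<^sup>2 + (0 + x * s)\<^sup>2)) else 0) \<partial>lborel)"
      by (rule nn_integral_real_affine) (use x in auto)
    also have "\<dots> = (\<integral>\<^sup>+s. G x s \<partial>lborel)"
      unfolding sq G_def
      by (subst nn_integral_cmult[symmetric]) (auto simp: ennreal_mult[symmetric] intro!: nn_integral_cong)
    finally show ?thesis .
  qed
  have "(\<integral>\<^sup>+x. \<integral>\<^sup>+y. ennreal (if t < x\<^sup>2 + y\<^sup>2 then exp (- (x\<^sup>2 + y\<^sup>2)) else 0) \<partial>lborel \<partial>lborel)
      = (\<integral>\<^sup>+x. \<integral>\<^sup>+s. G x s \<partial>lborel \<partial>lborel)"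
    by (intro nn_integral_cong_AE eventually_mono[OF AE_lborel_singleton[of 0]] substitution)
  also have "\<dots> = (\<integral>\<^sup>+s. \<integral>\<^sup>+x. G x s \<partial>lborel \<partial>lborel)"
    by (rule lborel_pair.Fubini'[symmetric]) (unfold G_def, measurable)
  also have "\<dots> = (\<integral>\<^sup>+s. ennreal (exp (-t) / (1 + s\<^sup>2)) \<partial>lborel)"
    unfolding G_def
    by (intro nn_integral_cong nn_integral_abs_mult_exp_neg_sq_tail t) (simp add: add_pos_nonneg)
  also have "\<dots> = 2 * (\<integral>\<^sup>+s. ennreal (exp (-t) / (1 + s\<^sup>2)) * indicator {0..} s \<partial>lborel)"
    by (rule nn_integral_lborel_even) (measurable; simp)+
  also have "(\<integral>\<^sup>+s. ennreal (exp (-t) / (1 + s\<^sup>2)) * indicator {0..} s \<partial>lborel)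
      = ennreal (exp (-t) * (pi / 2) - exp (-t) * arctan 0)"
  proof (rule nn_integral_FTC_atLeast)
    show "((\<lambda>s. exp (-t) * arctan s) \<longlongrightarrow> exp (-t) * (pi / 2)) at_top"
      by (intro tendsto_intros) (simp_all add: tendsto_arctan_at_top)
    show "((\<lambda>s. exp (-t) * arctan s) has_real_derivative exp (-t) / (1 + x\<^sup>2)) (at x)" for x :: real
      by (auto intro!: derivative_eq_intros simp: add_nonneg_eq_0_iff field_simps power2_eq_square)
  qed auto
  finally show ?thesis
    by (simp add: numeral_mult_ennreal mult.commute)
qed

lemma normal_density_half_variance: "normal_density 0 (sqrt (1/2)) x = exp (- x\<^sup>2) / sqrt pi"
  by (simp add: normal_density_def power2_eq_square[symmetric])

lemma (in prob_space) complex_normal_cmod_sq_tail: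
  fixes Z :: "'a \<Rightarrow> complex"
  assumes re: "distributed M lborel (\<lambda>\<omega>. Re (Z \<omega>)) (normal_density 0 (sqrt (1/2)))"
    and im: "distributed M lborel (\<lambda>\<omega>. Im (Z \<omega>)) (normal_density 0 (sqrt (1/2)))"
    and indep: "indep_var borel (\<lambda>\<omega>. Re (Z \<omega>)) borel (\<lambda>\<omega>. Im (Z \<omega>))"
    and t: "t \<ge> 0"
  shows "prob {\<omega> \<in> space M. t < (cmod (Z \<omega>))\<^sup>2} = exp (-t)"
proof -
  let ?f = "normal_density 0 (sqrt (1/2))"
  define D where "D = {p :: real \<times> real. t < (fst p)\<^sup>2 + (snd p)\<^sup>2}"
  have [measurable]: "D \<in> sets (lborel \<Otimes>\<^sub>M lborel)"
  proof -
    have "{p \<in> space (lborel \<Otimes>\<^sub>M lborel). t < (fst p)\<^sup>2 + (snd p)\<^sup>2} \<in> sets (lborel \<Otimes>\<^sub>M lborel)"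
      by measurable
    then show ?thesis unfolding D_def by (simp add: space_pair_measure)
  qed
  have "indep_var lborel (id \<circ> (\<lambda>\<omega>. Re (Z \<omega>))) lborel (id \<circ> (\<lambda>\<omega>. Im (Z \<omega>)))"
    by (rule indep_var_compose[OF indep]) auto
  then have joint: "distributed M (lborel \<Otimes>\<^sub>M lborel) (\<lambda>\<omega>. (Re (Z \<omega>), Im (Z \<omega>)))
      (\<lambda>(x, y). ennreal (?f x) * ennreal (?f y))"
    by (intro distributed_joint_indep[OF lborel.sigma_finite_measure_axioms
          lborel.sigma_finite_measure_axioms re im]) simp
  have density: "(\<lambda>(x, y). ennreal (?f x) * ennreal (?f y)) (x, y) * indicator D (x, y)
      = ennreal (1 / pi) * ennreal (if t < x\<^sup>2 + y\<^sup>2 then exp (- (x\<^sup>2 + y\<^sup>2)) else 0)" for x y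
  proof -
    have "exp (- x\<^sup>2) / sqrt pi * (exp (- y\<^sup>2) / sqrt pi) = 1 / pi * exp (- (x\<^sup>2 + y\<^sup>2))"
      by (simp add: exp_add[symmetric] field_simps)
    then show ?thesis
      unfolding normal_density_half_variance D_def
      by (simp add: ennreal_mult[symmetric] split: split_indicator)
  qed
  have "emeasure M ((\<lambda>\<omega>. (Re (Z \<omega>), Im (Z \<omega>))) -` D \<inter> space M)
      = (\<integral>\<^sup>+p. (\<lambda>(x, y). ennreal (?f x) * ennreal (?f y)) p * indicator D p \<partial>(lborel \<Otimes>\<^sub>M lborel))"
    by (rule distributed_emeasure[OF joint]) measurable
  also have "\<dots> = (\<integral>\<^sup>+x. \<integral>\<^sup>+y. (\<lambda>(x, y). ennreal (?f x) * ennreal (?f y)) (x, y) * indicator D (x, y)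
                    \<partial>lborel \<partial>lborel)"
    by (rule lborel.nn_integral_fst[symmetric]) measurable
  also have "\<dots> = ennreal (1 / pi) * (\<integral>\<^sup>+x. \<integral>\<^sup>+y.
                    ennreal (if t < x\<^sup>2 + y\<^sup>2 then exp (- (x\<^sup>2 + y\<^sup>2)) else 0) \<partial>lborel \<partial>lborel)"
    unfolding density by (simp add: nn_integral_cmult)
  also have "\<dots> = ennreal (exp (-t))"
    unfolding nn_integral_exp_neg_norm_sq_tail[OF t] by (simp add: ennreal_mult[symmetric])
  finally show ?thesis
    by (simp add: emeasure_eq_measure D_def vimage_def Int_def cmod_power2 conj_commute)
qed

lemma sinr_gt_iff:
  fixes X \<beta> \<rho> \<epsilon> :: real
  assumes "X \<ge> 0" "\<beta> < 1" "\<rho> > 0" and feasible: "\<beta> - (1 - \<beta>) * \<epsilon> > 0"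
  shows "\<epsilon> < X * \<beta> / (X * (1 - \<beta>) + 1 / \<rho>) \<longleftrightarrow> \<epsilon> / (\<rho> * (\<beta> - (1 - \<beta>) * \<epsilon>)) < X"
proof -
  have "X * (1 - \<beta>) + 1 / \<rho> > 0"
    using assms by (simp add: add_nonneg_pos)
  then have "\<epsilon> < X * \<beta> / (X * (1 - \<beta>) + 1 / \<rho>) \<longleftrightarrow> \<epsilon> / \<rho> < X * (\<beta> - (1 - \<beta>) * \<epsilon>)"
    by (simp add: pos_less_divide_eq algebra_simps)
  also have "\<dots> \<longleftrightarrow> \<epsilon> / (\<rho> * (\<beta> - (1 - \<beta>) * \<epsilon>)) < X"
    using pos_divide_less_eq[OF feasible, of "\<epsilon> / \<rho>" X] by (simp add: mult.commute)
  finally show ?thesis .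
qed

lemma sic_success_iff:
  fixes X1 X2 \<beta> \<rho> \<epsilon> :: real
  assumes "X1 \<ge> 0" "X2 \<ge> 0" "\<beta> < 1" "\<rho> > 0" "\<beta> - (1 - \<beta>) * \<epsilon> > 0"
  defines "A \<equiv> \<epsilon> / (\<rho> * (\<beta> - (1 - \<beta>) * \<epsilon>))" and "B \<equiv> \<epsilon> / (\<rho> * (1 - \<beta>))"
  shows "(\<epsilon> < X1 * \<beta> / (X1 * (1 - \<beta>) + 1 / \<rho>) \<and> \<epsilon> < X2 * \<beta> / (X2 * (1 - \<beta>) + 1 / \<rho>) \<and>
          \<epsilon> < \<rho> * (1 - \<beta>) * (if E then X2 else X1))
     \<longleftrightarrow> (if E then A < X1 \<and> max A B < X2 else max A B < X1 \<and> A < X2)"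
proof -
  have "\<epsilon> < \<rho> * (1 - \<beta>) * X \<longleftrightarrow> B < X" for X
    using assms by (simp add: B_def pos_divide_less_eq mult.commute)
  then show ?thesis
    using assms by (auto simp: sinr_gt_iff)
qed

lemma gain_gt_iff:
  assumes "d > 0"
  shows "c < gain hk d \<alpha> \<omega> \<longleftrightarrow> c * d powr \<alpha> < (cmod (hk \<omega>))\<^sup>2"
  using assms by (simp add: gain_def powr_minus_divide pos_less_divide_eq)

lemma (in prob_space) indep_vars_imp_indep_var:
  assumes indep: "indep_vars M' X I" and "i \<in> I" "j \<in> I" "i \<noteq> j"
  shows "indep_var (M' i) (X i) (M' j) (X j)"
proof -
  have "indep_var (M' i) ((\<lambda>f. f i) \<circ> (\<lambda>\<omega>. restrict (\<lambda>k. X k \<omega>) {i}))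
                  (M' j) ((\<lambda>f. f j) \<circ> (\<lambda>\<omega>. restrict (\<lambda>k. X k \<omega>) {j}))"
    by (intro indep_var_compose[OF indep_var_restrict[OF indep]] measurable_component_singleton)
      (use assms in auto)
  then show ?thesis
    by (simp add: comp_def)
qed

lemma (in prob_space) prob_indep_switch:
  fixes Z :: "nat \<Rightarrow> 'a \<Rightarrow> 'b :: topological_space"
  assumes indep: "indep_vars (\<lambda>_. borel) Z {0, 1, 2}"
    and [measurable]: "e \<in> sets borel" "a \<in> sets borel" "b \<in> sets borel" "c \<in> sets borel" "d \<in> sets borel"
  shows "prob {\<omega> \<in> space M. if Z 0 \<omega> \<in> e then Z 1 \<omega> \<in> a \<and> Z 2 \<omega> \<in> b else Z 1 \<omega> \<in> c \<and> Z 2 \<omega> \<in> d}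
       = prob {\<omega> \<in> space M. Z 0 \<omega> \<in> e} * prob {\<omega> \<in> space M. Z 1 \<omega> \<in> a} * prob {\<omega> \<in> space M. Z 2 \<omega> \<in> b}
       + (1 - prob {\<omega> \<in> space M. Z 0 \<omega> \<in> e}) * prob {\<omega> \<in> space M. Z 1 \<omega> \<in> c} * prob {\<omega> \<in> space M. Z 2 \<omega> \<in> d}"
proof -
  have [measurable]: "Z i \<in> borel_measurable M" if "i \<in> {0, 1, 2}" for i
    using indep that by (auto simp: indep_vars_def)
  have product: "prob {\<omega> \<in> space M. Z 0 \<omega> \<in> u \<and> Z 1 \<omega> \<in> v \<and> Z 2 \<omega> \<in> w}
      = prob {\<omega> \<in> space M. Z 0 \<omega> \<in> u} * prob {\<omega> \<in> space M. Z 1 \<omega> \<in> v} * prob {\<omega> \<in> space M. Z 2 \<omega> \<in> w}"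
    if "u \<in> sets borel" "v \<in> sets borel" "w \<in> sets borel" for u v w
  proof -
    define S where "S i = (if i = 0 then u else if i = 1 then v else w)" for i :: nat
    have "prob (\<Inter>i\<in>{0, 1, 2}. Z i -` S i \<inter> space M) = (\<Prod>i\<in>{0, 1, 2}. prob (Z i -` S i \<inter> space M))"
      using that by (intro indep_varsD[OF indep]) (auto simp: S_def)
    then show ?thesis
      by (simp add: S_def vimage_def Int_def Collect_conj_eq[symmetric] conj_ac mult.assoc)
  qed
  have compl: "prob {\<omega> \<in> space M. Z 0 \<omega> \<in> -e} = 1 - prob {\<omega> \<in> space M. Z 0 \<omega> \<in> e}"
  proof -
    have "{\<omega> \<in> space M. Z 0 \<omega> \<in> -e} = space M - {\<omega> \<in> space M. Z 0 \<omega> \<in> e}"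
      by auto
    then show ?thesis
      by (simp only:) (rule prob_compl, measurable)
  qed
  have "{\<omega> \<in> space M. if Z 0 \<omega> \<in> e then Z 1 \<omega> \<in> a \<and> Z 2 \<omega> \<in> b else Z 1 \<omega> \<in> c \<and> Z 2 \<omega> \<in> d}
      = {\<omega> \<in> space M. Z 0 \<omega> \<in> e \<and> Z 1 \<omega> \<in> a \<and> Z 2 \<omega> \<in> b}
        \<union> {\<omega> \<in> space M. Z 0 \<omega> \<in> -e \<and> Z 1 \<omega> \<in> c \<and> Z 2 \<omega> \<in> d}"
    by auto
  also have "prob \<dots> = prob {\<omega> \<in> space M. Z 0 \<omega> \<in> e \<and> Z 1 \<omega> \<in> a \<and> Z 2 \<omega> \<in> b}
                      + prob {\<omega> \<in> space M. Z 0 \<omega> \<in> -e \<and> Z 1 \<omega> \<in> c \<and> Z 2 \<omega> \<in> d}"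
    by (rule finite_measure_Union) (measurable, measurable, auto)
  finally show ?thesis
    using compl product[of e a b] product[of "-e" c d] by (simp add: borel_comp)
qed

lemma (in prob_space) indep_vars_distance_gap_fading:
  assumes indep: "indep_vars (\<lambda>_. borel) (all_vars h xh yh) ({0..3} \<times> {1, 2})"
  shows "indep_vars (\<lambda>_. borel)
           (\<lambda>j \<omega>. if j = 0 then est_dist xh yh 1 \<omega> - est_dist xh yh 2 \<omega> else (cmod (h j \<omega>))\<^sup>2)
           {0, 1, 2 :: nat}"
proof -
  define K :: "nat \<Rightarrow> (nat \<times> nat) set" where
    "K j = (if j = 0 then {(2, 1), (3, 1), (2, 2), (3, 2)} else {(0, j), (1, j)})" for j
  define Y :: "nat \<Rightarrow> (nat \<times> nat \<Rightarrow> real) \<Rightarrow> real" where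
    "Y j f = (if j = 0 then sqrt ((f (2, 1))\<^sup>2 + (f (3, 1))\<^sup>2) - sqrt ((f (2, 2))\<^sup>2 + (f (3, 2))\<^sup>2)
              else (f (0, j))\<^sup>2 + (f (1, j))\<^sup>2)" for j f
  have "indep_vars (\<lambda>j. PiM (K j) (\<lambda>_. borel)) (\<lambda>j \<omega>. restrict (\<lambda>i. all_vars h xh yh i \<omega>) (K j)) {0, 1, 2}"
    by (intro indep_vars_restrict[OF indep]) (auto simp: K_def disjoint_family_on_def)
  moreover have "Y j \<in> borel_measurable (PiM (K j) (\<lambda>_. borel))" for j
    unfolding Y_def K_def by (cases "j = 0") simp_all
  ultimately have "indep_vars (\<lambda>_. borel) (\<lambda>j \<omega>. Y j (restrict (\<lambda>i. all_vars h xh yh i \<omega>) (K j))) {0, 1, 2}"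
    by (rule indep_vars_compose2)
  moreover have "(\<lambda>j \<omega>. Y j (restrict (\<lambda>i. all_vars h xh yh i \<omega>) (K j)))
      = (\<lambda>j \<omega>. if j = 0 then est_dist xh yh 1 \<omega> - est_dist xh yh 2 \<omega> else (cmod (h j \<omega>))\<^sup>2)"
    by (auto simp: fun_eq_iff Y_def K_def all_vars_def est_dist_def cmod_power2)
  ultimately show ?thesis
    by simp
qed

lemma (in prob_space) prob_fading_given_estimated_order:
  assumes h_re: "\<And>k. k \<in> {1, 2} \<Longrightarrow>
                   distributed M lborel (\<lambda>\<omega>. Re (h k \<omega>)) (normal_density 0 (sqrt (1/2)))"
    and h_im: "\<And>k. k \<in> {1, 2} \<Longrightarrow>
                 distributed M lborel (\<lambda>\<omega>. Im (h k \<omega>)) (normal_density 0 (sqrt (1/2)))"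
    and indep: "indep_vars (\<lambda>_. borel) (all_vars h xh yh) ({0..3} \<times> {1, 2})"
    and "a1 \<ge> 0" "b1 \<ge> 0" "a2 \<ge> 0" "b2 \<ge> 0"
  defines "Pe \<equiv> prob {\<omega> \<in> space M. est_dist xh yh 2 \<omega> < est_dist xh yh 1 \<omega>}"
  shows "prob {\<omega> \<in> space M. if est_dist xh yh 2 \<omega> < est_dist xh yh 1 \<omega>
                              then a1 < (cmod (h 1 \<omega>))\<^sup>2 \<and> b2 < (cmod (h 2 \<omega>))\<^sup>2
                              else b1 < (cmod (h 1 \<omega>))\<^sup>2 \<and> a2 < (cmod (h 2 \<omega>))\<^sup>2}
       = Pe * exp (- a1) * exp (- b2) + (1 - Pe) * exp (- b1) * exp (- a2)"
proof -
  define Z where "Z j \<omega> = (if j = 0 then est_dist xh yh 1 \<omega> - est_dist xh yh 2 \<omega> else (cmod (h j \<omega>))\<^sup>2)"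
    for j \<omega>
  have indep_Z: "indep_vars (\<lambda>_. borel) Z {0, 1, 2}"
    unfolding Z_def[abs_def] using indep_vars_distance_gap_fading[OF indep] .
  have tail: "prob {\<omega> \<in> space M. c < Z k \<omega>} = exp (-c)" if "k \<in> {1, 2}" "c \<ge> 0" for k c
    using complex_normal_cmod_sq_tail[OF h_re h_im _ \<open>c \<ge> 0\<close>] that
      indep_vars_imp_indep_var[OF indep, of "(0, k)" "(1, k)"]
    by (auto simp: Z_def all_vars_def)
  have Pe_Z: "prob {\<omega> \<in> space M. 0 < Z 0 \<omega>} = Pe"
    by (simp add: Z_def Pe_def)
  have "{\<omega> \<in> space M. if est_dist xh yh 2 \<omega> < est_dist xh yh 1 \<omega>
                        then a1 < (cmod (h 1 \<omega>))\<^sup>2 \<and> b2 < (cmod (h 2 \<omega>))\<^sup>2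
                        else b1 < (cmod (h 1 \<omega>))\<^sup>2 \<and> a2 < (cmod (h 2 \<omega>))\<^sup>2}
      = {\<omega> \<in> space M. if Z 0 \<omega> \<in> {0<..} then Z 1 \<omega> \<in> {a1<..} \<and> Z 2 \<omega> \<in> {b2<..}
                        else Z 1 \<omega> \<in> {b1<..} \<and> Z 2 \<omega> \<in> {a2<..}}"
    by (simp add: Z_def)
  then show ?thesis
    using assms by (simp only:) (subst prob_indep_switch[OF indep_Z]; simp add: tail Pe_Z)
qed

theorem proposition2:
  fixes M :: "'a measure"
    and h :: "nat \<Rightarrow> 'a \<Rightarrow> complex"
    and xh yh :: "nat \<Rightarrow> 'a \<Rightarrow> real"
    and x y :: "nat \<Rightarrow> real"
    and \<sigma> \<alpha> \<rho> \<beta> R0 :: real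
  assumes M: "prob_space M"
    and h_re: "\<And>k. k \<in> {1, 2} \<Longrightarrow>
                 distributed M lborel (\<lambda>\<omega>. Re (h k \<omega>)) (normal_density 0 (sqrt (1/2)))"
    and h_im: "\<And>k. k \<in> {1, 2} \<Longrightarrow>
                 distributed M lborel (\<lambda>\<omega>. Im (h k \<omega>)) (normal_density 0 (sqrt (1/2)))"
    and xh_distr: "\<And>k. k \<in> {1, 2} \<Longrightarrow> distributed M lborel (xh k) (normal_density (x k) \<sigma>)"
    and yh_distr: "\<And>k. k \<in> {1, 2} \<Longrightarrow> distributed M lborel (yh k) (normal_density (y k) \<sigma>)"
    and indep: "prob_space.indep_vars M (\<lambda>_. borel) (all_vars h xh yh) ({0..3} \<times> {1, 2})"
    and \<sigma>_pos: "\<sigma> > 0"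
    and d_order: "0 < true_dist x y 1" "true_dist x y 1 < true_dist x y 2"
    and \<alpha>_pos: "\<alpha> > 0"
    and \<rho>_pos: "\<rho> > 0"
    and \<beta>_range: "0 < \<beta>" "\<beta> < 1"
    and R0_pos: "R0 > 0"
    and feasible: "\<beta> - (1 - \<beta>) * (2 powr R0 - 1) > 0"
  shows
    "let \<epsilon>0 = 2 powr R0 - 1;
         d1 = true_dist x y 1; d2 = true_dist x y 2;
         X1 = gain (h 1) d1 \<alpha>; X2 = gain (h 2) d2 \<alpha>;
         dh1 = est_dist xh yh 1; dh2 = est_dist xh yh 2;
         XN = (\<lambda>\<omega>. if dh1 \<omega> > dh2 \<omega> then X2 \<omega> else X1 \<omega>);
         Pe = measure M {\<omega> \<in> space M. dh1 \<omega> > dh2 \<omega>};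
         Pcop = 1 - measure M {\<omega> \<in> space M.
                   X1 \<omega> * \<beta> / (X1 \<omega> * (1 - \<beta>) + 1 / \<rho>) > \<epsilon>0 \<and>
                   X2 \<omega> * \<beta> / (X2 \<omega> * (1 - \<beta>) + 1 / \<rho>) > \<epsilon>0 \<and>
                   \<rho> * (1 - \<beta>) * XN \<omega> > \<epsilon>0};
         lam1 = d1 powr \<alpha>; lam2 = d2 powr \<alpha>;
         A = \<epsilon>0 / (\<rho> * (\<beta> - (1 - \<beta>) * \<epsilon>0));
         B = \<epsilon>0 / (\<rho> * (1 - \<beta>));
         \<zeta> = max A B
     in Pcop = 1 - (1 - Pe) * exp (-(lam2 * A + lam1 * \<zeta>)) - Pe * exp (-(lam1 * A + lam2 * \<zeta>))"
proof -
  interpret prob_space M by (fact M)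
  define \<epsilon>0 where "\<epsilon>0 = (2::real) powr R0 - 1"
  define A where "A = \<epsilon>0 / (\<rho> * (\<beta> - (1 - \<beta>) * \<epsilon>0))"
  define \<zeta> where "\<zeta> = max A (\<epsilon>0 / (\<rho> * (1 - \<beta>)))"
  define lam where "lam k = true_dist x y k powr \<alpha>" for k
  define X where "X k = gain (h k) (true_dist x y k) \<alpha>" for k
  define Pe where "Pe = prob {\<omega> \<in> space M. est_dist xh yh 2 \<omega> < est_dist xh yh 1 \<omega>}"
  have feasible': "\<beta> - (1 - \<beta>) * \<epsilon>0 > 0" using feasible by (simp add: \<epsilon>0_def)
  have "\<epsilon>0 > 0" using R0_pos by (simp add: \<epsilon>0_def)
  then have "A > 0" using feasible' \<rho>_pos by (simp add: A_def)
  then have "\<zeta> > 0" by (simp add: \<zeta>_def less_max_iff_disj)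
  have "lam 1 > 0" "lam 2 > 0" using d_order by (simp_all add: lam_def)
  have nonneg: "0 \<le> X k \<omega>" for k \<omega>
    by (simp add: X_def gain_def)
  have sic: "(\<epsilon>0 < X 1 \<omega> * \<beta> / (X 1 \<omega> * (1 - \<beta>) + 1 / \<rho>) \<and> \<epsilon>0 < X 2 \<omega> * \<beta> / (X 2 \<omega> * (1 - \<beta>) + 1 / \<rho>) \<and>
              \<epsilon>0 < \<rho> * (1 - \<beta>) * (if est_dist xh yh 2 \<omega> < est_dist xh yh 1 \<omega> then X 2 \<omega> else X 1 \<omega>))
      \<longleftrightarrow> (if est_dist xh yh 2 \<omega> < est_dist xh yh 1 \<omega>
           then A * lam 1 < (cmod (h 1 \<omega>))\<^sup>2 \<and> \<zeta> * lam 2 < (cmod (h 2 \<omega>))\<^sup>2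
           else \<zeta> * lam 1 < (cmod (h 1 \<omega>))\<^sup>2 \<and> A * lam 2 < (cmod (h 2 \<omega>))\<^sup>2)" for \<omega>
    unfolding sic_success_iff[OF nonneg nonneg \<beta>_range(2) \<rho>_pos feasible', folded A_def \<zeta>_def]
    using d_order by (simp add: X_def lam_def gain_gt_iff)
  have "prob {\<omega> \<in> space M. if est_dist xh yh 2 \<omega> < est_dist xh yh 1 \<omega>
                              then A * lam 1 < (cmod (h 1 \<omega>))\<^sup>2 \<and> \<zeta> * lam 2 < (cmod (h 2 \<omega>))\<^sup>2
                              else \<zeta> * lam 1 < (cmod (h 1 \<omega>))\<^sup>2 \<and> A * lam 2 < (cmod (h 2 \<omega>))\<^sup>2}
      = Pe * exp (- (A * lam 1)) * exp (- (\<zeta> * lam 2)) + (1 - Pe) * exp (- (\<zeta> * lam 1)) * exp (- (A * lam 2))"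
    unfolding Pe_def using \<open>A > 0\<close> \<open>\<zeta> > 0\<close> \<open>lam 1 > 0\<close> \<open>lam 2 > 0\<close>
    by (intro prob_fading_given_estimated_order h_re h_im indep) simp_all
  then show ?thesis
    unfolding Let_def \<epsilon>0_def[symmetric] X_def[symmetric] lam_def[symmetric] Pe_def[symmetric]
    unfolding A_def[symmetric] \<zeta>_def[symmetric] sic
    by (simp add: exp_add[symmetric] algebra_simps)
qed

end
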